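(* Let $\mathbb{X},\mathbb{Y}$ be smooth real Banach spaces and let $T\in\mathbb{L}(\mathbb{X},\mathbb{Y})$ with $\operatorname{rank} T>1$ and $\|T\|=1$. Suppose $M_T\neq\emptyset$ and $x\in M_T$. Then $(x,Tx)$ is a weak CPP.
   Context: All Banach spaces are real and of dimension greater than $1$. $\mathbb{L}(\mathbb{X},\mathbb{Y})$ is the space of bounded linear operators with operator norm. $M_T=\{x\in S_{\mathbb{X}}:\|Tx\|=\|T\|\}$. $B(x,r)=\{u:\|u-x\|<r\}$. $x\perp_B y$ means $\|x+\lambda y\|\ge\|x\|$ for all real $\lambda$; $x^\perp=\{y: x\perp_B y\}$. For $x\in S_{\mathbb{X}}$, $y\in S_{\mathbb{Y}}$, $(x,y)$ is a weak CPP if there exist $z\in x^\perp\cap S_{\mathbb{X}}$, $w\in y^\perp\cap S_{\mathbb{Y}}$, $r>0$, $\mu>0$ such that for all $a,b\in\mathbb{R}$, $ax+bz\in B(x,r)\cap S_{\mathbb{X}}$ implies $\|ay+b\mu w\|\le1$. *)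

theory Defs
  imports "HOL-Analysis.Analysis"
begin

definition bj_orth :: "'a::real_normed_vector \<Rightarrow> 'a \<Rightarrow> bool" where
  "bj_orth x y \<longleftrightarrow> (\<forall>t::real. norm (x + t *\<^sub>R y) \<ge> norm x)"

definition smooth_space :: "'a::real_normed_vector itself \<Rightarrow> bool" where
  "smooth_space _ \<longleftrightarrow> (\<forall>x::'a. norm x = 1 \<longrightarrow>
      (\<exists>!f::'a \<Rightarrow> real. bounded_linear f \<and> onorm f = 1 \<and> f x = 1))"

definition dim_gt_one :: "'a::real_vector itself \<Rightarrow> bool" where
  "dim_gt_one _ \<longleftrightarrow> (\<exists>u v::'a. u \<noteq> v \<and> independent {u, v})"

definition rank_gt_one :: "('a::real_vector \<Rightarrow> 'b::real_vector) \<Rightarrow> bool" where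
  "rank_gt_one T \<longleftrightarrow> (\<exists>u v. u \<in> range T \<and> v \<in> range T \<and> u \<noteq> v \<and> independent {u, v})"

definition norm_attain_set :: "('a::real_normed_vector \<Rightarrow> 'b::real_normed_vector) \<Rightarrow> 'a set" where
  "norm_attain_set T = {x. norm x = 1 \<and> norm (T x) = onorm T}"

definition weak_CPP :: "'a::real_normed_vector \<Rightarrow> 'b::real_normed_vector \<Rightarrow> bool" where
  "weak_CPP x y \<longleftrightarrow> norm x = 1 \<and> norm y = 1 \<and>
     (\<exists>z w r \<mu>. bj_orth x z \<and> norm z = 1 \<and> bj_orth y w \<and> norm w = 1 \<and>
        r > 0 \<and> \<mu> > 0 \<and>
        (\<forall>a b::real. norm (a *\<^sub>R x + b *\<^sub>R z - x) < r \<and> norm (a *\<^sub>R x + b *\<^sub>R z) = 1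
            \<longrightarrow> norm (a *\<^sub>R y + (b * \<mu>) *\<^sub>R w) \<le> 1))"

end

theory Submission
  imports Defs
begin

text \<open>Let \<open>f\<close> be the supporting functional of \<open>Y\<close> at \<open>T x\<close>. Then \<open>g = f \<circ> T\<close> has norm at
  most one and \<open>g x = 1\<close>, so \<open>g\<close> supports \<open>x\<close>. Since \<open>T\<close> has rank greater than one, the
  kernel of \<open>g\<close> is not contained in that of \<open>T\<close>; a unit vector \<open>z\<close> with \<open>g z = 0\<close> and
  \<open>T z \<noteq> 0\<close> is orthogonal to \<open>x\<close>, and \<open>T z\<close> is orthogonal to \<open>T x\<close> because \<open>f\<close> vanishes on it.
  With \<open>\<mu> = \<parallel>T z\<parallel>\<close> and \<open>w = T z / \<mu>\<close> we get \<open>a T x + b \<mu> w = T (a x + b z)\<close>, whose norm is at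
  most one on the unit sphere.\<close>

lemma le_norm_if_onorm_le_one:
  fixes f :: "'a::real_normed_vector \<Rightarrow> real"
  assumes "bounded_linear f" "onorm f \<le> 1"
  shows "f u \<le> norm u"
proof -
  have "f u \<le> onorm f * norm u"
    using onorm[OF assms(1), of u] by simp
  also have "\<dots> \<le> norm u"
    using mult_right_mono[OF assms(2) norm_ge_zero] by simp
  finally show ?thesis .
qed

lemma bj_orth_if_supporting_functional:
  fixes f :: "'a::real_normed_vector \<Rightarrow> real"
  assumes "linear f" "\<And>u. f u \<le> norm u" "f x = norm x" "f y = 0"
  shows "bj_orth x y"
  unfolding bj_orth_def
proof
  fix t :: real
  have "f (x + t *\<^sub>R y) = norm x"
    using assms(3,4) by (simp add: linear_add[OF assms(1)] linear_scale[OF assms(1)])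
  then show "norm x \<le> norm (x + t *\<^sub>R y)"
    using assms(2) by metis
qed

lemma bj_orth_scale:
  assumes "bj_orth x y"
  shows "bj_orth x (c *\<^sub>R y)"
  using assms unfolding bj_orth_def by (metis scaleR_scaleR)

lemma not_rank_gt_one_if_range_on_line:
  assumes "\<And>p. \<exists>c. T p = c *\<^sub>R v"
  shows "\<not> rank_gt_one T"
proof
  assume "rank_gt_one T"
  then obtain p q where pq: "T p \<noteq> T q" "independent {T p, T q}"
    unfolding rank_gt_one_def by blast
  obtain c d where cd: "T p = c *\<^sub>R v" "T q = d *\<^sub>R v"
    using assms[of p] assms[of q] by blast
  show False
  proof (cases "c = 0")
    case True
    then have "T p = 0"
      using cd(1) by simp
    then show False
      using pq(2) dependent_zero[of "{T p, T q}"] by simp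
  next
    case False
    then have "T q = (d / c) *\<^sub>R T p"
      using cd by simp
    then have "T q \<in> span ({T p, T q} - {T q})"
      using pq(1) by (simp add: span_base span_mul insert_Diff_if)
    then show False
      using pq(2) unfolding dependent_def by blast
  qed
qed

lemma rank_gt_one_kernel_not_subset:
  fixes g :: "'a::real_vector \<Rightarrow> real"
  assumes "linear T" "rank_gt_one T" "linear g"
  shows "\<exists>z. g z = 0 \<and> T z \<noteq> 0"
proof (rule ccontr)
  assume ker: "\<not> (\<exists>z. g z = 0 \<and> T z \<noteq> 0)"
  show False
  proof (cases "\<exists>x0. g x0 \<noteq> 0")
    case True
    then obtain x0 where x0: "g x0 \<noteq> 0" by blast
    have "\<exists>c. T p = c *\<^sub>R T x0" for p
    proof -
      have "g (p - (g p / g x0) *\<^sub>R x0) = 0"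
        using x0 by (simp add: linear_diff[OF assms(3)] linear_scale[OF assms(3)])
      then have "T (p - (g p / g x0) *\<^sub>R x0) = 0"
        using ker by blast
      then have "T p = (g p / g x0) *\<^sub>R T x0"
        by (simp add: linear_diff[OF assms(1)] linear_scale[OF assms(1)])
      then show ?thesis ..
    qed
    then show False
      using not_rank_gt_one_if_range_on_line assms(2) by blast
  next
    case False
    then have "\<exists>c. T p = c *\<^sub>R 0" for p
      using ker by simp
    then show False
      using not_rank_gt_one_if_range_on_line assms(2) by blast
  qed
qed

lemma weak_CPP_if_orthogonal_image:
  assumes T: "bounded_linear T" "onorm T = 1"
    and x: "norm x = 1" "norm (T x) = 1"
    and z: "norm z = 1" "bj_orth x z" "T z \<noteq> 0" "bj_orth (T x) (T z)"
  shows "weak_CPP x (T x)"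
proof -
  define \<mu> where "\<mu> = norm (T z)"
  define w where "w = (1 / \<mu>) *\<^sub>R T z"
  have \<mu>: "\<mu> > 0"
    using z(3) by (simp add: \<mu>_def)
  have w: "norm w = 1" "bj_orth (T x) w"
    using \<mu> z(4) by (simp_all add: w_def \<mu>_def bj_orth_scale)
  have "norm (a *\<^sub>R T x + (b * \<mu>) *\<^sub>R w) \<le> 1"
    if "norm (a *\<^sub>R x + b *\<^sub>R z) = 1" for a b :: real
  proof -
    have "a *\<^sub>R T x + (b * \<mu>) *\<^sub>R w = T (a *\<^sub>R x + b *\<^sub>R z)"
      using \<mu> by (simp add: w_def linear_add[OF bounded_linear.linear[OF T(1)]]
          linear_scale[OF bounded_linear.linear[OF T(1)]])
    then show ?thesis
      using onorm[OF T(1), of "a *\<^sub>R x + b *\<^sub>R z"] that T(2) by simp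
  qed
  then show ?thesis
    unfolding weak_CPP_def using x z w \<mu>
    by (intro conjI exI[of _ z] exI[of _ w] exI[of _ 1] exI[of _ \<mu>]) auto
qed

theorem mainTheorem2:
  fixes T :: "'a::banach \<Rightarrow> 'b::banach" and x :: 'a
  assumes "dim_gt_one TYPE('a)" and "dim_gt_one TYPE('b)"
    and "smooth_space TYPE('a)" and "smooth_space TYPE('b)"
    and "bounded_linear T" and "rank_gt_one T" and "onorm T = 1"
    and "norm_attain_set T \<noteq> {}" and "x \<in> norm_attain_set T"
  shows "weak_CPP x (T x)"
proof -
  have x: "norm x = 1" "norm (T x) = 1"
    using assms(7,9) by (auto simp: norm_attain_set_def)
  obtain f :: "'b \<Rightarrow> real" where f: "bounded_linear f" "onorm f = 1" "f (T x) = 1"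
    using assms(4) x(2) unfolding smooth_space_def by blast
  have fT: "bounded_linear (f \<circ> T)" "onorm (f \<circ> T) \<le> 1"
    using onorm_compose[OF f(1) assms(5)] f(2) assms(7)
    by (simp_all add: bounded_linear_compose[OF f(1) assms(5)] o_def)
  obtain z0 where z0: "f (T z0) = 0" "T z0 \<noteq> 0"
    using rank_gt_one_kernel_not_subset[of T "f \<circ> T"] assms(5,6) fT(1)
    by (auto simp: bounded_linear.linear)
  define z where "z = (1 / norm z0) *\<^sub>R z0"
  have "z0 \<noteq> 0"
    using z0(2) assms(5) linear_0 bounded_linear.linear by metis
  moreover have Tz: "T z = (1 / norm z0) *\<^sub>R T z0"
    by (simp add: z_def linear_scale[OF bounded_linear.linear[OF assms(5)]])
  ultimately have z: "norm z = 1" "T z \<noteq> 0" "f (T z) = 0"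
    using z0 by (simp_all add: z_def linear_scale[OF bounded_linear.linear[OF f(1)]])
  have "bj_orth x z"
    using bj_orth_if_supporting_functional[of "f \<circ> T" x z] fT x f(3) z(3)
      le_norm_if_onorm_le_one[OF fT] by (simp add: bounded_linear.linear)
  moreover have "bj_orth (T x) (T z)"
    using bj_orth_if_supporting_functional[of f "T x" "T z"] f x(2) z(3)
      le_norm_if_onorm_le_one[OF f(1)] by (simp add: bounded_linear.linear)
  ultimately show ?thesis
    using weak_CPP_if_orthogonal_image assms(5,7) x z by blast
qed

end
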